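(* Let $p$ be an odd prime, $q\in\mathbb{C}_p$ with $|q-1|_p<1$, $\alpha\in\mathbb{N}\cup\{0\}$, $h\in\mathbb{N}$, and let $n_1,n_2,k$ be nonnegative integers with $n_1+n_2>2k$. Then \[ \sum_{l=0}^{n_1+n_2-2k}\binom{n_1+n_2-2k}{l}(-1)^l\frac{\widetilde{G}_{l+2k+1,q}^{(\alpha,h)}}{l+2k+1}=\begin{cases}[2]_q+q^{h+1}\dfrac{\widetilde{G}_{n_1+n_2+1,q^{-1}}^{(\alpha,h)}}{n_1+n_2+1} & \text{if } k=0,\\[2mm] \displaystyle\sum_{l=0}^{2k}\binom{2k}{l}(-1)^{2k+l}\Big\{[2]_q+q^{h+1}\frac{\widetilde{G}_{n_1+n_2-l+1,q^{-1}}^{(\alpha,h)}}{n_1+n_2-l+1}\Big\} & \text{if } k\neq 0.\end{cases} \]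
   Context: For $x\in\mathbb{Z}_p$ write $[x]_q=\frac{1-q^x}{1-q}$, and $[2]_q=1+q$. For a uniformly differentiable $f:\mathbb{Z}_p\to\mathbb{C}_p$, the fermionic $p$-adic $q$-integral is $\int_{\mathbb{Z}_p}f(\xi)\,d\mu_{-q}(\xi)=\lim_{N\to\infty}\frac{1}{[p^N]_{-q}}\sum_{\xi=0}^{p^N-1}f(\xi)(-q)^{\xi}$, with $[p^N]_{-q}=\frac{1+q^{p^N}}{1+q}$. The $(h,q)$-Genocchi polynomials with weight $\alpha$ are defined for $n\ge0$, $x\in\mathbb{Z}_p$ by $\frac{\widetilde{G}_{n+1,q}^{(\alpha,h)}(x)}{n+1}=\int_{\mathbb{Z}_p}q^{(h-1)\xi}[x+\xi]_{q^{\alpha}}^n\,d\mu_{-q}(\xi)$, and the numbers are $\widetilde{G}_{n,q}^{(\alpha,h)}=\widetilde{G}_{n,q}^{(\alpha,h)}(0)$. The numbers $\widetilde{G}_{n,q^{-1}}^{(\alpha,h)}$ are obtained by replacing $q$ by $q^{-1}$ everywhere: $\frac{\widetilde{G}_{n+1,q^{-1}}^{(\alpha,h)}}{n+1}=\int_{\mathbb{Z}_p}q^{(1-h)\xi}[\xi]_{q^{-\alpha}}^n\,d\mu_{-q^{-1}}(\xi)$. *)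

theory Defs
  imports Complex_Main "HOL-Computational_Algebra.Polynomial"
begin

text \<open>An abstract model of C_p: a field of characteristic 0 with a complete,
  non-archimedean absolute value extending the p-adic absolute value on Q,
  which is algebraically closed.  C_p is such a field.\<close>

definition abs_conv :: "('a::field \<Rightarrow> real) \<Rightarrow> (nat \<Rightarrow> 'a) \<Rightarrow> 'a \<Rightarrow> bool" where
  "abs_conv absv s L \<longleftrightarrow> (\<forall>e>0. \<exists>M. \<forall>N\<ge>M. absv (s N - L) < e)"

definition abs_cauchy :: "('a::field \<Rightarrow> real) \<Rightarrow> (nat \<Rightarrow> 'a) \<Rightarrow> bool" where
  "abs_cauchy absv s \<longleftrightarrow> (\<forall>e>0. \<exists>M. \<forall>m\<ge>M. \<forall>n\<ge>M. absv (s m - s n) < e)"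

definition Cp_like :: "nat \<Rightarrow> ('a::field_char_0 \<Rightarrow> real) \<Rightarrow> bool" where
  "Cp_like p absv \<longleftrightarrow>
     (\<forall>x. absv x \<ge> 0) \<and> (\<forall>x. absv x = 0 \<longleftrightarrow> x = 0) \<and>
     (\<forall>x y. absv (x * y) = absv x * absv y) \<and>
     (\<forall>x y. absv (x + y) \<le> max (absv x) (absv y)) \<and>
     absv (of_nat p) = inverse (real p) \<and>
     (\<forall>s. abs_cauchy absv s \<longrightarrow> (\<exists>L. abs_conv absv s L)) \<and>
     (\<forall>P::'a poly. degree P > 0 \<longrightarrow> (\<exists>x. poly P x = 0))"

text \<open>q-number [x]_q for natural x, i.e. (1 - q^x)/(1 - q) (= x when q = 1).\<close>
definition qnum :: "'a::field \<Rightarrow> nat \<Rightarrow> 'a" where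
  "qnum q x = (\<Sum>i<x. q ^ i)"

text \<open>Fermionic p-adic q-integral: limit of
  1/[p^N]_{-q} * sum_{xi < p^N} f xi (-q)^xi, limit w.r.t. absv.\<close>
definition ferm_int :: "nat \<Rightarrow> ('a::field_char_0 \<Rightarrow> real) \<Rightarrow> 'a \<Rightarrow> (nat \<Rightarrow> 'a) \<Rightarrow> 'a" where
  "ferm_int p absv q f = (THE L. abs_conv absv
      (\<lambda>N. (\<Sum>\<xi><p ^ N. f \<xi> * (- q) ^ \<xi>) / ((1 + q ^ (p ^ N)) / (1 + q))) L)"

fun hq_genocchi :: "nat \<Rightarrow> ('a::field_char_0 \<Rightarrow> real) \<Rightarrow> nat \<Rightarrow> nat \<Rightarrow> 'a \<Rightarrow> nat \<Rightarrow> 'a" where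
  "hq_genocchi p absv \<alpha> h q 0 = 0"
| "hq_genocchi p absv \<alpha> h q (Suc n) =
     of_nat (Suc n) * ferm_int p absv q (\<lambda>\<xi>. q ^ ((h - 1) * \<xi>) * (qnum (q ^ \<alpha>) \<xi>) ^ n)"

end

theory Submission
  imports Defs
begin

text \<open>For a polynomial F let I(F) be the fermionic q-integral of v^\<xi> F([\<xi>]_Q); the
  (h,q)-Genocchi quotients are the values of I on monomials for v = q^(h-1), Q = q^\<alpha>.
  Telescoping the Riemann sums over \<xi> < p^N gives the shift equation
  I(F) + q v I(F(1 + Q x)) = (1 + q) F(0). Since the shift maps x^n to Q^n x^n plus lower terms
  and 1 + q v Q^n is a unit, a linear functional satisfying the homogeneous shift equation is
  zero; the same degree induction proves that the limits defining I exist. Hence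
  F \<mapsto> I_q(F) - q^2 v I_(q^-1)(F(1 - x)) - (1 + q)(F(0) - q v F(1)) vanishes, and the theorem is
  this reflection formula for F = x^(2k) (1 - x)^(n1+n2-2k), expanded binomially on both sides.\<close>

section \<open>Non-archimedean absolute values\<close>

locale nonarch_absv =
  fixes absv :: "'a::field \<Rightarrow> real"
  assumes absv_nonneg: "absv x \<ge> 0"
    and absv_eq_0_iff: "absv x = 0 \<longleftrightarrow> x = 0"
    and absv_mult: "absv (x * y) = absv x * absv y"
    and absv_add_le_max: "absv (x + y) \<le> max (absv x) (absv y)"
begin

lemma absv_0 [simp]: "absv 0 = 0"
  using absv_eq_0_iff by simp

lemma absv_1 [simp]: "absv 1 = 1"
proof -
  have "absv 1 = absv 1 * absv 1" using absv_mult[of 1 1] by simp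
  moreover have "absv 1 \<noteq> 0" using absv_eq_0_iff by simp
  ultimately show ?thesis by simp
qed

lemma absv_minus [simp]: "absv (- x) = absv x"
proof -
  have "absv (-1) ^ 2 = 1 ^ 2" using absv_mult[of "-1" "-1"] by (simp add: power2_eq_square)
  then have "absv (-1) = 1"
    using absv_nonneg[of "-1"] by (rule power2_eq_imp_eq) simp
  then show ?thesis using absv_mult[of "-1" x] by simp
qed

lemma absv_minus_commute: "absv (x - y) = absv (y - x)"
  using absv_minus[of "x - y"] by simp

lemma absv_add_le: "absv (x + y) \<le> absv x + absv y"
  using absv_add_le_max[of x y] absv_nonneg[of x] absv_nonneg[of y] by linarith

lemma absv_diff_le_max: "absv (x - y) \<le> max (absv x) (absv y)"
  using absv_add_le_max[of x "- y"] by simp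

lemma absv_power: "absv (x ^ n) = absv x ^ n"
  by (induction n) (simp_all add: absv_mult)

lemma absv_inverse: "absv (inverse x) = inverse (absv x)"
proof (cases "x = 0")
  case False
  then have "absv (inverse x) * absv x = 1" using absv_mult[of "inverse x" x] by simp
  moreover have "absv x \<noteq> 0" using False absv_eq_0_iff by simp
  ultimately show ?thesis by (simp add: field_simps)
qed simp

lemma absv_divide: "absv (x / y) = absv x / absv y"
  by (simp add: divide_inverse absv_mult absv_inverse)

lemma absv_of_nat_le_1: "absv (of_nat n) \<le> 1"
proof (induction n)
  case (Suc n)
  then show ?case using absv_add_le_max[of 1 "of_nat n"] by (simp add: add.commute)
qed simp

lemma absv_sum_le:
  assumes "\<And>i. i \<in> A \<Longrightarrow> absv (f i) \<le> B" and "0 \<le> B"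
  shows "absv (sum f A) \<le> B"
  using assms
proof (induction A rule: infinite_finite_induct)
  case (insert x F)
  then show ?case by (auto intro: order_trans[OF absv_add_le_max])
qed auto

lemma absv_add_eq_left:
  assumes "absv y < absv x"
  shows "absv (x + y) = absv x"
proof -
  have "absv x \<le> max (absv (x + y)) (absv y)" using absv_diff_le_max[of "x + y" y] by simp
  then show ?thesis using absv_add_le_max[of x y] assms by linarith
qed

lemma absv_near_1:
  assumes "absv (x - 1) < 1"
  shows "absv x = 1"
  using absv_add_eq_left[of "x - 1" 1] assms by simp

lemma near_1_mult:
  assumes "absv (x - 1) < 1" and "absv (y - 1) < 1"
  shows "absv (x * y - 1) < 1"
proof -
  have "x * y - 1 = x * (y - 1) + (x - 1)" by (simp add: algebra_simps)
  then have "absv (x * y - 1) \<le> max (absv (x * (y - 1))) (absv (x - 1))"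
    by (metis absv_add_le_max)
  then show ?thesis using assms absv_near_1[OF assms(1)] by (simp add: absv_mult)
qed

lemma near_1_power:
  assumes "absv (x - 1) < 1"
  shows "absv (x ^ n - 1) < 1"
  by (induction n) (simp_all add: near_1_mult[OF assms])

lemma near_1_inverse:
  assumes "absv (x - 1) < 1"
  shows "absv (inverse x - 1) < 1"
proof -
  have "x \<noteq> 0" using absv_near_1[OF assms] by auto
  then have "inverse x - 1 = (1 - x) / x" by (simp add: field_simps)
  then show ?thesis using assms absv_near_1[OF assms] by (simp add: absv_divide absv_minus_commute)
qed

lemma abs_conv_iff_tendsto: "abs_conv absv s L \<longleftrightarrow> (\<lambda>N. absv (s N - L)) \<longlonglongrightarrow> 0"
  unfolding abs_conv_def LIMSEQ_def dist_real_def by (simp add: absv_nonneg)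

lemma abs_conv_majorant:
  assumes "eventually (\<lambda>N. absv (s N - L) \<le> g N) sequentially" and "g \<longlonglongrightarrow> 0"
  shows "abs_conv absv s L"
  unfolding abs_conv_iff_tendsto
  by (rule tendsto_sandwich[of "\<lambda>_. 0" _ sequentially g])
    (simp_all add: assms absv_nonneg)

lemma abs_conv_const: "abs_conv absv (\<lambda>N. c) c"
  unfolding abs_conv_iff_tendsto by simp

lemma abs_conv_add:
  assumes "abs_conv absv a A" and "abs_conv absv b B"
  shows "abs_conv absv (\<lambda>N. a N + b N) (A + B)"
proof (rule abs_conv_majorant[OF eventuallyI])
  show "absv (a N + b N - (A + B)) \<le> absv (a N - A) + absv (b N - B)" for N
    using absv_add_le[of "a N - A" "b N - B"] by (simp add: algebra_simps)
  show "(\<lambda>N. absv (a N - A) + absv (b N - B)) \<longlonglongrightarrow> 0"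
    using tendsto_add[OF assms[unfolded abs_conv_iff_tendsto]] by simp
qed

lemma abs_conv_minus:
  assumes "abs_conv absv a A"
  shows "abs_conv absv (\<lambda>N. - a N) (- A)"
  using assms absv_minus[of "a _ - A"] unfolding abs_conv_iff_tendsto by simp

lemma abs_conv_diff:
  assumes "abs_conv absv a A" and "abs_conv absv b B"
  shows "abs_conv absv (\<lambda>N. a N - b N) (A - B)"
  using abs_conv_add[OF assms(1) abs_conv_minus[OF assms(2)]] by simp

lemma abs_conv_mult:
  assumes "abs_conv absv a A" and "abs_conv absv b B"
  shows "abs_conv absv (\<lambda>N. a N * b N) (A * B)"
proof (rule abs_conv_majorant[OF eventuallyI])
  show "absv (a N * b N - A * B)
      \<le> absv (a N - A) * absv (b N - B) + absv A * absv (b N - B) + absv B * absv (a N - A)" for N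
  proof -
    have "a N * b N - A * B = ((a N - A) * (b N - B) + A * (b N - B)) + B * (a N - A)"
      by (simp add: algebra_simps)
    then show ?thesis
      using absv_add_le[of "(a N - A) * (b N - B) + A * (b N - B)" "B * (a N - A)"]
        absv_add_le[of "(a N - A) * (b N - B)" "A * (b N - B)"] by (simp add: absv_mult)
  qed
  have "(\<lambda>N. absv (a N - A) * absv (b N - B) + absv A * absv (b N - B) + absv B * absv (a N - A))
      \<longlonglongrightarrow> 0 * 0 + absv A * 0 + absv B * 0"
    using assms[unfolded abs_conv_iff_tendsto] by (intro tendsto_intros)
  then show "(\<lambda>N. absv (a N - A) * absv (b N - B) + absv A * absv (b N - B) + absv B * absv (a N - A))
      \<longlonglongrightarrow> 0" by simp
qed

lemma abs_conv_cmult: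
  assumes "abs_conv absv a A"
  shows "abs_conv absv (\<lambda>N. c * a N) (c * A)"
  using abs_conv_mult[OF abs_conv_const assms] .

lemma abs_conv_inverse:
  assumes "abs_conv absv a A" and "A \<noteq> 0"
  shows "abs_conv absv (\<lambda>N. inverse (a N)) (inverse A)"
proof (rule abs_conv_majorant)
  have pos: "absv A > 0" using assms(2) absv_eq_0_iff absv_nonneg by (metis less_eq_real_def)
  with assms(1) have "eventually (\<lambda>N. absv (a N - A) < absv A) sequentially"
    unfolding abs_conv_iff_tendsto by (rule order_tendstoD(2))
  then show "eventually (\<lambda>N. absv (inverse (a N) - inverse A) \<le> absv (a N - A) / (absv A * absv A))
      sequentially"
  proof (rule eventually_mono)
    fix N
    assume "absv (a N - A) < absv A"
    then have aN: "absv (a N) = absv A" using absv_add_eq_left[of "a N - A" A] by simp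
    then have "a N \<noteq> 0" using pos by auto
    then have "inverse (a N) - inverse A = (A - a N) / (a N * A)"
      using assms(2) by (simp add: field_simps)
    then show "absv (inverse (a N) - inverse A) \<le> absv (a N - A) / (absv A * absv A)"
      by (simp add: absv_divide absv_mult aN absv_minus_commute)
  qed
  show "(\<lambda>N. absv (a N - A) / (absv A * absv A)) \<longlonglongrightarrow> 0"
    using tendsto_divide_zero[OF assms(1)[unfolded abs_conv_iff_tendsto]] .
qed

lemma abs_conv_divide:
  assumes "abs_conv absv a A" and "abs_conv absv b B" and "B \<noteq> 0"
  shows "abs_conv absv (\<lambda>N. a N / b N) (A / B)"
  using abs_conv_mult[OF assms(1) abs_conv_inverse[OF assms(2,3)]] by (simp add: divide_inverse)

lemma abs_conv_poly:
  assumes "abs_conv absv a A"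
  shows "abs_conv absv (\<lambda>N. poly F (a N)) (poly F A)"
  by (induction F) (auto intro!: abs_conv_add abs_conv_mult abs_conv_const assms)

lemma abs_conv_unique:
  assumes "abs_conv absv a A" and "abs_conv absv a B"
  shows "A = B"
proof -
  have "abs_conv absv (\<lambda>N. a N - a N) (A - B)" by (rule abs_conv_diff[OF assms])
  then have "(\<lambda>N. absv (A - B)) \<longlonglongrightarrow> 0"
    unfolding abs_conv_iff_tendsto by (simp add: absv_minus_commute)
  then have "absv (A - B) = 0" by (simp add: LIMSEQ_const_iff)
  then show ?thesis by (simp add: absv_eq_0_iff)
qed

lemma abs_conv_The:
  assumes "abs_conv absv a A"
  shows "(THE L. abs_conv absv a L) = A"
  using assms abs_conv_unique by blast

end

section \<open>q-numbers and p-adic limits\<close>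

lemma qnum_add: "qnum x (m + n) = qnum x m + x ^ m * qnum x n"
  by (induction n) (simp_all add: qnum_def algebra_simps power_add)

lemma qnum_Suc: "qnum x (Suc n) = 1 + x * qnum x n"
  using qnum_add[of x 1 n] by (simp add: qnum_def)

lemma qnum_mult: "qnum x (m * n) = qnum x m * qnum (x ^ m) n"
  by (induction n) (simp_all add: qnum_def[of _ 0] qnum_Suc qnum_add algebra_simps power_mult)

lemma power_diff_1_eq_qnum: "x ^ n - 1 = (x - 1) * qnum x n"
  unfolding qnum_def by (rule power_diff_1_eq)

locale padic_absv = nonarch_absv absv for absv :: "'a::field \<Rightarrow> real" +
  fixes p :: nat
  assumes p_gt_1: "p > 1" and odd_p: "odd p"
    and absv_of_nat_p: "absv (of_nat p) = inverse (real p)"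
begin

lemma absv_2: "absv (2 :: 'a) = 1"
proof -
  obtain j where p: "p = 2 * j + 1" using odd_p oddE by blast
  have "absv (1 :: 'a) \<le> max (absv (of_nat p)) (absv (2 * of_nat j :: 'a))"
    using absv_diff_le_max[of "of_nat p" "2 * of_nat j :: 'a"] by (simp add: p)
  moreover have "inverse (real p) < 1" using p_gt_1 by (simp add: inverse_less_1_iff)
  ultimately have "1 \<le> absv (2 :: 'a) * absv (of_nat j :: 'a)"
    by (simp add: absv_of_nat_p absv_mult)
  moreover have "absv (of_nat j :: 'a) \<le> 1" and "absv (2 :: 'a) \<le> 1"
    using absv_of_nat_le_1[of j] absv_of_nat_le_1[of 2] by simp_all
  ultimately show ?thesis
    using absv_nonneg[of 2] absv_nonneg[of "of_nat j"] by (smt (verit) mult_left_le)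
qed

lemma one_plus_near_1_neq_0:
  assumes "absv (x - 1) < 1"
  shows "1 + x \<noteq> 0"
proof -
  have "absv (2 + (x - 1)) = 1" using absv_add_eq_left[of "x - 1" 2] assms absv_2 by simp
  then show ?thesis by (auto simp: algebra_simps)
qed

lemma absv_power_diff_1_le:
  assumes "absv x \<le> 1"
  shows "absv (x ^ n - 1) \<le> absv (x - 1)"
proof -
  have "absv (qnum x n) \<le> 1"
    unfolding qnum_def by (rule absv_sum_le) (simp_all add: absv_power assms power_le_one absv_nonneg)
  then show ?thesis
    unfolding power_diff_1_eq_qnum absv_mult using absv_nonneg[of "x - 1"] by (simp add: mult_left_le)
qed

lemma absv_qnum_p_le:
  assumes "absv x \<le> 1"
  shows "absv (qnum x p) \<le> max (absv (x - 1)) (inverse (real p))"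
proof -
  have qnum_p: "qnum x p = (\<Sum>i<p. x ^ i - 1) + of_nat p"
    unfolding qnum_def by (simp add: sum_subtractf)
  have "absv (\<Sum>i<p. x ^ i - 1) \<le> absv (x - 1)"
    by (rule absv_sum_le) (simp_all add: absv_power_diff_1_le assms absv_nonneg)
  then show ?thesis
    unfolding qnum_p using absv_add_le_max[of "\<Sum>i<p. x ^ i - 1" "of_nat p"] absv_of_nat_p by linarith
qed

text \<open>Since [p^(N+1)]_x = [p^N]_x [p]_(x^(p^N)), each factor p contributes the
  factor max |x - 1| (1/p) < 1.\<close>
lemma absv_qnum_p_power_le:
  assumes "absv (x - 1) < 1"
  shows "absv (qnum x (p ^ N)) \<le> max (absv (x - 1)) (inverse (real p)) ^ N"
proof (induction N)
  case (Suc N)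
  let ?c = "max (absv (x - 1)) (inverse (real p))"
  have x: "absv x = 1" by (rule absv_near_1[OF assms])
  have "absv (qnum (x ^ p ^ N) p) \<le> max (absv (x ^ p ^ N - 1)) (inverse (real p))"
    by (rule absv_qnum_p_le) (simp add: absv_power x)
  also have "\<dots> \<le> ?c" using absv_power_diff_1_le[of x "p ^ N"] x by auto
  finally have "absv (qnum (x ^ p ^ N) p) \<le> ?c" .
  then have "absv (qnum x (p ^ N)) * absv (qnum (x ^ p ^ N) p) \<le> ?c ^ N * ?c"
    using Suc absv_nonneg by (intro mult_mono) (auto intro: zero_le_power max.coboundedI1)
  moreover have "absv (qnum x (p ^ Suc N)) = absv (qnum x (p ^ N)) * absv (qnum (x ^ p ^ N) p)"
    by (simp add: qnum_mult absv_mult mult.commute[of p])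
  ultimately show ?case by (simp add: mult.commute[of ?c])
qed (simp add: qnum_def)

lemma abs_conv_qnum_p_power:
  assumes "absv (x - 1) < 1"
  shows "abs_conv absv (\<lambda>N. qnum x (p ^ N)) 0"
proof (rule abs_conv_majorant[OF eventuallyI])
  let ?c = "max (absv (x - 1)) (inverse (real p))"
  show "absv (qnum x (p ^ N) - 0) \<le> ?c ^ N" for N
    using absv_qnum_p_power_le[OF assms] by simp
  have "?c < 1" using assms p_gt_1 by (auto simp: inverse_less_1_iff)
  then show "(\<lambda>N. ?c ^ N) \<longlonglongrightarrow> 0"
    using absv_nonneg[of "x - 1"] by (intro LIMSEQ_power_zero) auto
qed

lemma abs_conv_power_p_power:
  assumes "absv (x - 1) < 1"
  shows "abs_conv absv (\<lambda>N. x ^ (p ^ N)) 1"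
  using abs_conv_add[OF abs_conv_cmult[OF abs_conv_qnum_p_power[OF assms]] abs_conv_const,
      of "x - 1" 1]
  by (simp add: power_diff_1_eq_qnum[symmetric])

end

section \<open>The fermionic integral of polynomial weights\<close>

locale fermionic = padic_absv absv p for absv :: "'a::field_char_0 \<Rightarrow> real" and p +
  fixes q v Q :: 'a
  assumes q_near_1: "absv (q - 1) < 1" and v_near_1: "absv (v - 1) < 1"
    and Q_near_1: "absv (Q - 1) < 1"
begin

definition integrand :: "'a poly \<Rightarrow> nat \<Rightarrow> 'a" where
  "integrand F \<xi> = v ^ \<xi> * poly F (qnum Q \<xi>)"

definition riemann_sum :: "'a poly \<Rightarrow> nat \<Rightarrow> 'a" where
  "riemann_sum F N = (\<Sum>\<xi><p ^ N. integrand F \<xi> * (- q) ^ \<xi>) / ((1 + q ^ (p ^ N)) / (1 + q))"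

definition ferm_poly :: "'a poly \<Rightarrow> 'a" where
  "ferm_poly F = ferm_int p absv q (integrand F)"

text \<open>Since [\<xi> + 1]_Q = 1 + Q [\<xi>]_Q, translating \<xi> by one composes F with 1 + Q x.\<close>
definition shift :: "'a poly \<Rightarrow> 'a poly" where
  "shift F = pcompose F [:1, Q:]"

lemma integrand_Suc: "integrand F (Suc \<xi>) = v * integrand (shift F) \<xi>"
  unfolding integrand_def shift_def by (simp add: poly_pcompose qnum_Suc mult.commute[of Q])

lemma sum_integrand_telescope:
  "(\<Sum>\<xi><M. integrand F \<xi> * (- q) ^ \<xi>) + q * v * (\<Sum>\<xi><M. integrand (shift F) \<xi> * (- q) ^ \<xi>)
     = integrand F 0 - integrand F M * (- q) ^ M"
proof (induction M)
  case (Suc M)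
  then show ?case
    by (simp add: integrand_Suc[of F M, symmetric] sum_distrib_left algebra_simps)
qed simp

lemma riemann_sum_add: "riemann_sum (F + G) = (\<lambda>N. riemann_sum F N + riemann_sum G N)"
  by (simp add: fun_eq_iff riemann_sum_def integrand_def algebra_simps sum.distrib add_divide_distrib)

lemma riemann_sum_smult: "riemann_sum (smult c F) = (\<lambda>N. c * riemann_sum F N)"
  by (simp add: fun_eq_iff riemann_sum_def integrand_def algebra_simps sum_distrib_left)

text \<open>The period p^N is odd, which turns the alternating boundary term into a sum.\<close>
lemma riemann_sum_shift:
  "riemann_sum F N + q * v * riemann_sum (shift F) N
     = (1 + q) * (integrand F 0 + integrand F (p ^ N) * q ^ (p ^ N)) / (1 + q ^ (p ^ N))"
proof -
  let ?S = "\<lambda>F. \<Sum>\<xi><p ^ N. integrand F \<xi> * (- q) ^ \<xi>"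
  have "(- q) ^ (p ^ N) = - (q ^ (p ^ N))" using odd_p by (simp add: power_minus_odd)
  then have "?S F + q * v * ?S (shift F) = integrand F 0 + integrand F (p ^ N) * q ^ (p ^ N)"
    using sum_integrand_telescope[of F "p ^ N"] by simp
  moreover have "riemann_sum F N + q * v * riemann_sum (shift F) N
      = (?S F + q * v * ?S (shift F)) / ((1 + q ^ (p ^ N)) / (1 + q))"
    unfolding riemann_sum_def by (simp add: add_divide_distrib)
  ultimately show ?thesis by (simp add: divide_divide_eq_right mult.commute)
qed

lemma abs_conv_boundary_term:
  "abs_conv absv (\<lambda>N. (1 + q) * (integrand F 0 + integrand F (p ^ N) * q ^ (p ^ N)) / (1 + q ^ (p ^ N)))
     ((1 + q) * poly F 0)"
proof -
  have "abs_conv absv (\<lambda>N. integrand F (p ^ N)) (1 * poly F 0)"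
    unfolding integrand_def
    by (rule abs_conv_mult[OF abs_conv_power_p_power[OF v_near_1]
          abs_conv_poly[OF abs_conv_qnum_p_power[OF Q_near_1]]])
  then have "abs_conv absv
      (\<lambda>N. (1 + q) * (integrand F 0 + integrand F (p ^ N) * q ^ (p ^ N)) / (1 + q ^ (p ^ N)))
      ((1 + q) * (integrand F 0 + 1 * poly F 0 * 1) / (1 + 1))"
    by (intro abs_conv_divide abs_conv_cmult abs_conv_add abs_conv_const abs_conv_mult
        abs_conv_power_p_power[OF q_near_1]) simp_all
  moreover have "(1 + q) * (integrand F 0 + 1 * poly F 0 * 1) / (1 + 1) = (1 + q) * poly F 0"
    by (simp add: integrand_def qnum_def field_simps)
  ultimately show ?thesis by metis
qed

lemma shift_monom_lower_coeffs:
  "\<forall>i\<ge>n. coeff (shift (monom 1 n) - smult (Q ^ n) (monom 1 n)) i = 0"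
proof -
  have "Q \<noteq> 0" using absv_near_1[OF Q_near_1] by auto
  then have "degree ([:1, Q:] ^ n) = n" and "coeff ([:1, Q:] ^ n) n = Q ^ n"
    using lead_coeff_power[of "[:1, Q:]" n] by (simp_all add: degree_power_eq)
  moreover have "pcompose (monom 1 n) [:1, Q:] = [:1, Q:] ^ n"
    by (induction n) (simp_all add: monom_Suc pcompose_pCons monom_0)
  ultimately show ?thesis
    by (auto simp: shift_def coeff_eq_0 le_less)
qed

text \<open>A strong induction on the degree, since shift x^n = Q^n x^n + (terms of lower degree).\<close>
lemma shift_induct:
  assumes "P 0" and "\<And>F G. P F \<Longrightarrow> P G \<Longrightarrow> P (F + G)" and "\<And>c F. P F \<Longrightarrow> P (smult c F)"
    and "\<And>n. P (shift (monom 1 n) - smult (Q ^ n) (monom 1 n)) \<Longrightarrow> P (monom 1 n)"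
  shows "P F"
proof -
  have "P R" if "\<forall>i\<ge>n. coeff R i = 0" for n R
    using that
  proof (induction n arbitrary: R)
    case 0
    then have "R = 0" by (auto intro: poly_eqI)
    then show ?case using assms(1) by simp
  next
    case (Suc n)
    have "P (monom 1 n)" by (intro assms(4) Suc.IH shift_monom_lower_coeffs)
    moreover have "P (R - smult (coeff R n) (monom 1 n))"
      using Suc.prems by (intro Suc.IH) (auto simp: le_Suc_eq)
    ultimately have "P (smult (coeff R n) (monom 1 n) + (R - smult (coeff R n) (monom 1 n)))"
      by (intro assms(2,3))
    then show ?case by simp
  qed
  then show ?thesis using coeff_eq_0[of F] by (meson Suc_le_eq)
qed

lemma one_plus_qvQ_power_neq_0: "1 + q * v * Q ^ n \<noteq> 0"
  by (intro one_plus_near_1_neq_0 near_1_mult q_near_1 v_near_1 near_1_power Q_near_1)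

lemma riemann_sum_convergent: "\<exists>L. abs_conv absv (riemann_sum F) L"
proof (induction F rule: shift_induct)
  case 1
  then show ?case using abs_conv_const[of 0] by (auto simp: riemann_sum_def integrand_def)
next
  case (2 F G)
  then show ?case unfolding riemann_sum_add using abs_conv_add by blast
next
  case (3 c F)
  then show ?case unfolding riemann_sum_smult using abs_conv_cmult by blast
next
  case (4 n)
  define X :: "'a poly" where "X = monom 1 n"
  define R where "R = shift X - smult (Q ^ n) X"
  obtain L where L: "abs_conv absv (riemann_sum R) L" using 4 unfolding R_def X_def by blast
  have "riemann_sum X N = ((1 + q) * (integrand X 0 + integrand X (p ^ N) * q ^ (p ^ N))
      / (1 + q ^ (p ^ N)) - q * v * riemann_sum R N) / (1 + q * v * Q ^ n)" for N
  proof -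
    have "riemann_sum (shift X) N = Q ^ n * riemann_sum X N + riemann_sum R N"
      using riemann_sum_add[of "smult (Q ^ n) X" R] by (simp add: R_def riemann_sum_smult)
    then show ?thesis
      using riemann_sum_shift[of X N] one_plus_qvQ_power_neq_0[of n] by (simp add: field_simps)
  qed
  moreover have "abs_conv absv (\<lambda>N. ((1 + q) * (integrand X 0 + integrand X (p ^ N) * q ^ (p ^ N))
      / (1 + q ^ (p ^ N)) - q * v * riemann_sum R N) / (1 + q * v * Q ^ n))
      (((1 + q) * poly X 0 - q * v * L) / (1 + q * v * Q ^ n))"
    by (intro abs_conv_divide abs_conv_diff abs_conv_boundary_term abs_conv_cmult L abs_conv_const
        one_plus_qvQ_power_neq_0)
  ultimately show ?case unfolding X_def by auto
qed

lemma abs_conv_ferm_poly: "abs_conv absv (riemann_sum F) (ferm_poly F)"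
proof -
  obtain L where L: "abs_conv absv (riemann_sum F) L" using riemann_sum_convergent by blast
  moreover have "ferm_poly F = (THE L. abs_conv absv (riemann_sum F) L)"
    by (simp add: ferm_poly_def ferm_int_def riemann_sum_def[abs_def])
  ultimately show ?thesis using abs_conv_The by simp
qed

lemma ferm_poly_add: "ferm_poly (F + G) = ferm_poly F + ferm_poly G"
  using abs_conv_ferm_poly[of "F + G"] abs_conv_add[OF abs_conv_ferm_poly abs_conv_ferm_poly]
  unfolding riemann_sum_add by (rule abs_conv_unique)

lemma ferm_poly_smult: "ferm_poly (smult c F) = c * ferm_poly F"
  using abs_conv_ferm_poly[of "smult c F"] abs_conv_cmult[OF abs_conv_ferm_poly]
  unfolding riemann_sum_smult by (rule abs_conv_unique)

lemma ferm_poly_sum: "ferm_poly (\<Sum>i\<in>I. smult (c i) (G i)) = (\<Sum>i\<in>I. c i * ferm_poly (G i))"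
proof (induction I rule: infinite_finite_induct)
  case (empty)
  then show ?case using ferm_poly_smult[of 0 0] by simp
qed (simp_all add: ferm_poly_add ferm_poly_smult ferm_poly_smult[of 0 0, simplified])

lemma ferm_poly_shift: "ferm_poly F + q * v * ferm_poly (shift F) = (1 + q) * poly F 0"
proof -
  have "abs_conv absv (\<lambda>N. riemann_sum F N + q * v * riemann_sum (shift F) N)
      (ferm_poly F + q * v * ferm_poly (shift F))"
    by (intro abs_conv_add abs_conv_cmult abs_conv_ferm_poly)
  then show ?thesis
    unfolding riemann_sum_shift using abs_conv_boundary_term abs_conv_unique by blast
qed


section \<open>The reflection formula\<close>

lemma shift_homogeneous_eq_0:
  assumes "\<And>F G. X (F + G) = X F + X G" and "\<And>c F. X (smult c F) = c * X F"
    and "\<And>F. X F + q * v * X (shift F) = 0"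
  shows "X F = 0"
proof (induction F rule: shift_induct)
  case 1
  then show ?case using assms(2)[of 0 0] by simp
next
  case (4 n)
  have "shift (monom 1 n) = smult (Q ^ n) (monom 1 n) + (shift (monom 1 n) - smult (Q ^ n) (monom 1 n))"
    by simp
  then have "X (shift (monom 1 n)) = Q ^ n * X (monom 1 n)"
    using 4 by (metis assms(1,2) add_0_right)
  then have "(1 + q * v * Q ^ n) * X (monom 1 n) = 0"
    using assms(3)[of "monom 1 n"] by (simp add: algebra_simps)
  then show ?case using one_plus_qvQ_power_neq_0[of n] by simp
qed (simp_all add: assms(1,2))

lemma fermionic_inverse: "fermionic absv p (inverse q) (inverse v) (inverse Q)"
  by unfold_locales
    (simp_all add: absv_nonneg absv_eq_0_iff absv_mult absv_add_le_max p_gt_1 odd_p absv_of_nat_p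
      near_1_inverse q_near_1 v_near_1 Q_near_1)

abbreviation ferm_poly_inv :: "'a poly \<Rightarrow> 'a" where
  "ferm_poly_inv \<equiv> fermionic.ferm_poly absv p (inverse q) (inverse v) (inverse Q)"

text \<open>The reflection x \<mapsto> 1 - x intertwines the shift of the q-integral with the inverse
  shift of the q^-1-integral.\<close>
lemma ferm_poly_reflection:
  "ferm_poly F - q\<^sup>2 * v * ferm_poly_inv (pcompose F [:1, -1:])
     = (1 + q) * (poly F 0 - q * v * poly F 1)"
proof -
  interpret inv: fermionic absv p "inverse q" "inverse v" "inverse Q" by (rule fermionic_inverse)
  have q: "q \<noteq> 0" and v: "v \<noteq> 0" and Q: "Q \<noteq> 0"
    using absv_near_1[OF q_near_1] absv_near_1[OF v_near_1] absv_near_1[OF Q_near_1] by auto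
  define D where "D F = ferm_poly F - q\<^sup>2 * v * ferm_poly_inv (pcompose F [:1, -1:])
    - (1 + q) * (poly F 0 - q * v * poly F 1)" for F
  have "D F = 0"
  proof (rule shift_homogeneous_eq_0)
    show "D (F + G) = D F + D G" for F G
      unfolding D_def by (simp add: ferm_poly_add inv.ferm_poly_add pcompose_add algebra_simps)
    show "D (smult c F) = c * D F" for c F
      unfolding D_def by (simp add: ferm_poly_smult inv.ferm_poly_smult pcompose_smult algebra_simps)
    show "D F + q * v * D (shift F) = 0" for F
    proof -
      let ?H = "pcompose F [:1, -1:]" and ?H' = "pcompose (shift F) [:1, -1:]"
      have "inv.shift ?H' = ?H"
        by (simp add: poly_eq_poly_eq_iff[symmetric] fun_eq_iff inv.shift_def shift_def
            poly_pcompose Q algebra_simps)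
      then have "ferm_poly_inv ?H' + inverse q * inverse v * ferm_poly_inv ?H
          = (1 + inverse q) * poly F (1 + Q)"
        using inv.ferm_poly_shift[of ?H'] by (simp add: shift_def poly_pcompose)
      then have "ferm_poly_inv ?H = q * v * ((1 + inverse q) * poly F (1 + Q) - ferm_poly_inv ?H')"
        using q v by (simp add: field_simps)
      also have "\<dots> = (1 + q) * v * poly F (1 + Q) - q * v * ferm_poly_inv ?H'"
        using q by (simp add: field_simps)
      finally have inv_H: "ferm_poly_inv ?H = (1 + q) * v * poly F (1 + Q) - q * v * ferm_poly_inv ?H'" .
      have F: "ferm_poly F = (1 + q) * poly F 0 - q * v * ferm_poly (shift F)"
        using ferm_poly_shift[of F] by (simp add: algebra_simps)
      have "poly (shift F) 0 = poly F 1" and "poly (shift F) 1 = poly F (1 + Q)"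
        by (simp_all add: shift_def poly_pcompose)
      then show ?thesis
        unfolding D_def inv_H F by (simp add: algebra_simps power2_eq_square)
    qed
  qed
  then show ?thesis unfolding D_def by simp
qed

lemma ferm_poly_binomial_sum:
  assumes "2 * k < n"
  shows "(\<Sum>l=0..n - 2 * k. of_nat (n - 2 * k choose l) * (-1) ^ l * ferm_poly (monom 1 (l + 2 * k)))
    = (\<Sum>l=0..2 * k. of_nat (2 * k choose l) * (-1) ^ (2 * k + l) *
        ((1 + q) + q\<^sup>2 * v * ferm_poly_inv (monom 1 (n - l))))"
proof -
  interpret inv: fermionic absv p "inverse q" "inverse v" "inverse Q" by (rule fermionic_inverse)
  define m where "m = n - 2 * k"
  define c :: "nat \<Rightarrow> 'a" where "c l = of_nat (2 * k choose l) * (-1) ^ (2 * k + l)" for l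
  define F :: "'a poly" where "F = monom 1 (2 * k) * [:1, -1:] ^ m"
  have F_expand: "F = (\<Sum>l=0..m. smult (of_nat (m choose l) * (-1) ^ l) (monom 1 (l + 2 * k)))"
  proof -
    have "poly F x = (\<Sum>l=0..m. of_nat (m choose l) * (-1) ^ l * x ^ (l + 2 * k))" for x
    proof -
      have "poly F x = x ^ (2 * k) * (- x + 1) ^ m" by (simp add: F_def poly_monom)
      also have "\<dots> = x ^ (2 * k) * (\<Sum>l\<le>m. of_nat (m choose l) * (- x) ^ l * 1 ^ (m - l))"
        by (simp only: binomial_ring)
      also have "\<dots> = (\<Sum>l=0..m. of_nat (m choose l) * (-1) ^ l * x ^ (l + 2 * k))"
        by (simp add: atLeast0AtMost sum_distrib_left power_add power_minus[of x] mult_ac)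
      finally show ?thesis .
    qed
    then show ?thesis by (simp add: poly_eq_poly_eq_iff[symmetric] fun_eq_iff poly_sum poly_monom)
  qed
  have H_expand: "pcompose F [:1, -1:] = (\<Sum>l=0..2 * k. smult (c l) (monom 1 (n - l)))"
  proof -
    have "poly (pcompose F [:1, -1:]) x = (\<Sum>l=0..2 * k. c l * x ^ (n - l))" for x
    proof -
      have "(1 - x) ^ 2 = (- 1 + x) ^ 2" by (simp add: power2_eq_square algebra_simps)
      then have "(1 - x) ^ (2 * k) = (- 1 + x) ^ (2 * k)" by (simp only: power_mult)
      then have "poly (pcompose F [:1, -1:]) x = (- 1 + x) ^ (2 * k) * x ^ m"
        by (simp add: F_def poly_monom poly_pcompose)
      also have "\<dots> = (\<Sum>l\<le>2 * k. of_nat (2 * k choose l) * (- 1) ^ l * x ^ (2 * k - l)) * x ^ m"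
        by (simp only: binomial_ring)
      also have "\<dots> = (\<Sum>l=0..2 * k. c l * x ^ (n - l))"
        unfolding atLeast0AtMost sum_distrib_right
      proof (rule sum.cong[OF refl])
        fix l
        assume "l \<in> {..2 * k}"
        then have "x ^ (2 * k - l) * x ^ m = x ^ (n - l)"
          using assms by (simp add: m_def power_add[symmetric])
        then show "of_nat (2 * k choose l) * (- 1) ^ l * x ^ (2 * k - l) * x ^ m = c l * x ^ (n - l)"
          by (simp add: c_def power_add mult.assoc)
      qed
      finally show ?thesis .
    qed
    then show ?thesis by (simp add: poly_eq_poly_eq_iff[symmetric] fun_eq_iff poly_sum poly_monom)
  qed
  have c_sum: "sum c {0..2 * k} = poly F 0"
    using arg_cong[OF H_expand, of "\<lambda>G. poly G 1"] by (simp add: poly_sum poly_monom poly_pcompose)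
  have "poly F 1 = 0" using assms by (simp add: F_def m_def poly_monom)
  then have "ferm_poly F = (1 + q) * poly F 0 + q\<^sup>2 * v * ferm_poly_inv (pcompose F [:1, -1:])"
    using ferm_poly_reflection[of F] by (simp add: algebra_simps)
  also have "\<dots> = (1 + q) * sum c {0..2 * k}
      + q\<^sup>2 * v * (\<Sum>l=0..2 * k. c l * ferm_poly_inv (monom 1 (n - l)))"
    by (simp only: H_expand inv.ferm_poly_sum c_sum)
  also have "\<dots> = (\<Sum>l=0..2 * k. c l * ((1 + q) + q\<^sup>2 * v * ferm_poly_inv (monom 1 (n - l))))"
    by (simp add: distrib_left sum.distrib sum_distrib_left sum_distrib_right mult_ac)
  finally show ?thesis
    by (simp add: F_expand ferm_poly_sum c_def m_def)
qed

end

lemma Cp_like_padic_absv: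
  assumes "prime p" and "odd p" and "Cp_like p absv"
  shows "padic_absv absv p"
  using assms prime_gt_1_nat unfolding Cp_like_def by unfold_locales auto

lemma (in fermionic) hq_genocchi_eq_ferm_poly:
  assumes "v = q ^ (h - 1)" and "Q = q ^ \<alpha>"
  shows "hq_genocchi p absv \<alpha> h q (Suc j) / of_nat (Suc j) = ferm_poly (monom 1 j)"
  unfolding ferm_poly_def integrand_def[abs_def] using assms
  by (simp add: power_mult poly_monom del: of_nat_Suc)

theorem mainTheorem7:
  fixes p :: nat and absv :: "'a::field_char_0 \<Rightarrow> real" and q :: 'a
    and \<alpha> h n1 n2 k :: nat
  assumes "prime p" and "odd p" and "Cp_like p absv"
    and "absv (q - 1) < 1"
    and "h \<ge> 1"
    and "n1 + n2 > 2 * k"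
  shows "(\<Sum>l=0..n1 + n2 - 2 * k. of_nat (n1 + n2 - 2 * k choose l) * (-1) ^ l *
            (hq_genocchi p absv \<alpha> h q (l + 2 * k + 1) / of_nat (l + 2 * k + 1))) =
         (if k = 0 then
            (1 + q) + q ^ (h + 1) *
              (hq_genocchi p absv \<alpha> h (inverse q) (n1 + n2 + 1) / of_nat (n1 + n2 + 1))
          else
            (\<Sum>l=0..2 * k. of_nat (2 * k choose l) * (-1) ^ (2 * k + l) *
              ((1 + q) + q ^ (h + 1) *
                (hq_genocchi p absv \<alpha> h (inverse q) (n1 + n2 - l + 1) / of_nat (n1 + n2 - l + 1)))))"
proof -
  have padic: "padic_absv absv p" by (rule Cp_like_padic_absv[OF assms(1-3)])
  interpret padic_absv absv p by (rule padic)
  interpret fermionic absv p q "q ^ (h - 1)" "q ^ \<alpha>"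
    by (intro fermionic.intro padic fermionic_axioms.intro near_1_power assms(4))
  interpret inv: fermionic absv p "inverse q" "inverse (q ^ (h - 1))" "inverse (q ^ \<alpha>)"
    by (rule fermionic_inverse)
  have genocchi: "hq_genocchi p absv \<alpha> h q (j + 1) / of_nat (j + 1) = ferm_poly (monom 1 j)" for j
    using hq_genocchi_eq_ferm_poly[of h \<alpha> j] by simp
  have genocchi_inv: "hq_genocchi p absv \<alpha> h (inverse q) (j + 1) / of_nat (j + 1)
      = ferm_poly_inv (monom 1 j)" for j
    using inv.hq_genocchi_eq_ferm_poly[of h \<alpha> j] by (simp add: power_inverse)
  have q_power: "q ^ (h + 1) = q\<^sup>2 * q ^ (h - 1)"
    using assms(5) by (simp add: power_add[symmetric])
  show ?thesis
    unfolding genocchi genocchi_inv q_power ferm_poly_binomial_sum[OF assms(6)] by simp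
qed

end
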